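(* For DEMO on the weighted vertex cover problem, the search point $0^n$ is included in the population in expected time $O\big(n^3(\log n+\log W_{max})^2\big)$, where $W_{max}$ is the maximum vertex weight.
   Context: Weighted vertex cover: $G=(V,E)$, $V=\{v_1,\dots,v_n\}$, $w:V\to\mathbb{N}^+$. Search points $x\in\{0,1\}^n$; $Cost(x)=\sum_i w(v_i)x_i$; $G(x)=(V(x),E(x))$ with $V(x)=V\setminus\{v_i:x_i=1\}$, $E(x)$ = edges with no selected endpoint; $LP(x)$ = optimal value of: minimize $\sum_{v_i\in V(x)}w(v_i)y_i$ s.t. $y_i+y_j\ge1$ for $\{v_i,v_j\}\in E(x)$, $0\le y_i\le1$. $f(x)=(Cost(x),LP(x))$, $f(x)\le f(y)$ componentwise. DEMO: $\delta=\frac1{2n}$, $b_1(x)=\lceil\log_{1+\delta}(1+Cost(x))\rceil$, $b_2(x)=\lceil\log_{1+\delta}(1+LP(x))\rceil$, $b=(b_1,b_2)$. Start with uniformly random $x$, $P=\{x\}$. Each iteration: choose $x\in P$ uniformly; create $x'$ by flipping each bit independently with probability $1/n$; if some $y\in P$ satisfies ($f(y)\le f(x')$ and $f(y)\ne f(x')$) or ($b(y)=b(x')$ and $Cost(y)+2LP(y)\le Cost(x')+2LP(x')$), discard $x'$; otherwise add $x'$ and delete all other $z\in P$ with $f(x')\le f(z)$ or $b(z)=b(x')$. Time = number of iterations. *)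

theory Defs
  imports "HOL-Probability.Probability"
begin

text \<open>Graph on vertex set {0..<n}: E is a set of 2-element subsets of {0..<n};
  weights w i > 0 for i < n. Search points are functions nat => bool that are False
  outside {0..<n} (bit i <-> x_i = 1).\<close>

definition wvc_instance :: "nat \<Rightarrow> nat set set \<Rightarrow> (nat \<Rightarrow> nat) \<Rightarrow> bool" where
  "wvc_instance n E w \<longleftrightarrow> (\<forall>e\<in>E. e \<subseteq> {0..<n} \<and> card e = 2) \<and> (\<forall>i<n. 0 < w i)"

definition Wmax :: "nat \<Rightarrow> (nat \<Rightarrow> nat) \<Rightarrow> nat" where
  "Wmax n w = Max (w ` {0..<n})"

definition Cost :: "nat \<Rightarrow> (nat \<Rightarrow> nat) \<Rightarrow> (nat \<Rightarrow> bool) \<Rightarrow> real" where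
  "Cost n w x = (\<Sum>i<n. if x i then real (w i) else 0)"

definition Vx :: "nat \<Rightarrow> (nat \<Rightarrow> bool) \<Rightarrow> nat set" where
  "Vx n x = {i. i < n \<and> \<not> x i}"

definition Ex :: "nat set set \<Rightarrow> (nat \<Rightarrow> bool) \<Rightarrow> nat set set" where
  "Ex E x = {e \<in> E. \<forall>i\<in>e. \<not> x i}"

text \<open>Optimal value of the LP relaxation of the residual instance G(x).\<close>
definition LP :: "nat \<Rightarrow> nat set set \<Rightarrow> (nat \<Rightarrow> nat) \<Rightarrow> (nat \<Rightarrow> bool) \<Rightarrow> real" where
  "LP n E w x = Inf {(\<Sum>i\<in>Vx n x. real (w i) * y i) | y :: nat \<Rightarrow> real.
      (\<forall>i\<in>Vx n x. 0 \<le> y i \<and> y i \<le> 1) \<and>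
      (\<forall>e\<in>Ex E x. \<forall>i j. e = {i, j} \<longrightarrow> y i + y j \<ge> 1)}"

definition fit :: "nat \<Rightarrow> nat set set \<Rightarrow> (nat \<Rightarrow> nat) \<Rightarrow> (nat \<Rightarrow> bool) \<Rightarrow> real \<times> real" where
  "fit n E w x = (Cost n w x, LP n E w x)"

definition weakly_le :: "real \<times> real \<Rightarrow> real \<times> real \<Rightarrow> bool" where
  "weakly_le a b \<longleftrightarrow> fst a \<le> fst b \<and> snd a \<le> snd b"

definition delta :: "nat \<Rightarrow> real" where
  "delta n = 1 / (2 * real n)"

definition box :: "nat \<Rightarrow> nat set set \<Rightarrow> (nat \<Rightarrow> nat) \<Rightarrow> (nat \<Rightarrow> bool) \<Rightarrow> int \<times> int" where
  "box n E w x = (\<lceil>log (1 + delta n) (1 + Cost n w x)\<rceil>, \<lceil>log (1 + delta n) (1 + LP n E w x)\<rceil>)"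

definition demo_update :: "nat \<Rightarrow> nat set set \<Rightarrow> (nat \<Rightarrow> nat) \<Rightarrow> (nat \<Rightarrow> bool) set \<Rightarrow> (nat \<Rightarrow> bool) \<Rightarrow> (nat \<Rightarrow> bool) set" where
  "demo_update n E w P x' =
    (if \<exists>y\<in>P. (weakly_le (fit n E w y) (fit n E w x') \<and> fit n E w y \<noteq> fit n E w x') \<or>
              (box n E w y = box n E w x' \<and>
               Cost n w y + 2 * LP n E w y \<le> Cost n w x' + 2 * LP n E w x')
     then P
     else insert x' {z \<in> P. \<not> (weakly_le (fit n E w x') (fit n E w z) \<or> box n E w z = box n E w x')})"

definition mutate :: "nat \<Rightarrow> (nat \<Rightarrow> bool) \<Rightarrow> (nat \<Rightarrow> bool) pmf" where
  "mutate n x = map_pmf (\<lambda>flip i. x i \<noteq> flip i) (Pi_pmf {0..<n} False (\<lambda>_. bernoulli_pmf (1 / real n)))"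

definition demo_step :: "nat \<Rightarrow> nat set set \<Rightarrow> (nat \<Rightarrow> nat) \<Rightarrow> (nat \<Rightarrow> bool) set \<Rightarrow> (nat \<Rightarrow> bool) set pmf" where
  "demo_step n E w P = bind_pmf (pmf_of_set P) (\<lambda>x. map_pmf (demo_update n E w P) (mutate n x))"

definition zero_pt :: "nat \<Rightarrow> bool" where
  "zero_pt = (\<lambda>_. False)"

definition demo_step_stopped :: "nat \<Rightarrow> nat set set \<Rightarrow> (nat \<Rightarrow> nat) \<Rightarrow> (nat \<Rightarrow> bool) set \<Rightarrow> (nat \<Rightarrow> bool) set pmf" where
  "demo_step_stopped n E w P = (if zero_pt \<in> P then return_pmf P else demo_step n E w P)"

definition init_pt :: "nat \<Rightarrow> (nat \<Rightarrow> bool) pmf" where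
  "init_pt n = Pi_pmf {0..<n} False (\<lambda>_. bernoulli_pmf (1/2))"

primrec demo_pop :: "nat \<Rightarrow> nat set set \<Rightarrow> (nat \<Rightarrow> nat) \<Rightarrow> nat \<Rightarrow> (nat \<Rightarrow> bool) set pmf" where
  "demo_pop n E w 0 = map_pmf (\<lambda>x. {x}) (init_pt n)"
| "demo_pop n E w (Suc t) = bind_pmf (demo_pop n E w t) (demo_step_stopped n E w)"

text \<open>Expected number of iterations T until 0^n is in the population:
  E[T] = sum over t of Pr[T > t].\<close>
definition demo_expected_time :: "nat \<Rightarrow> nat set set \<Rightarrow> (nat \<Rightarrow> nat) \<Rightarrow> ennreal" where
  "demo_expected_time n E w =
     (\<Sum>t. ennreal (measure_pmf.prob (demo_pop n E w t) {P. zero_pt \<notin> P}))"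

end

theory Submission
  imports Defs
begin

text \<open>
  Let \<open>b\<^sub>1\<close> be the cost coordinate of the box index. The smallest \<open>b\<^sub>1\<close> in the
  population never increases. While \<open>0\<^sup>n\<close> is missing, deselecting the heaviest selected
  vertex of a cheapest individual divides \<open>1 + Cost\<close> by at least \<open>1 + \<delta>\<close>, so the offspring
  is accepted and lowers the smallest \<open>b\<^sub>1\<close> by one; this mutation happens with probability
  at least \<open>1/(3n|P|)\<close>. Two individuals on the same diagonal \<open>b\<^sub>1 - b\<^sub>2 = const\<close> either
  share a box or one dominates the other, so \<open>|P| \<le> 2B + 1\<close>, where
  \<open>B = O(n (log n + log W\<^sub>m\<^sub>a\<^sub>x))\<close> bounds both box coordinates. Additive drift with the
  potential \<open>3n(2B + 1) \<cdot> min b\<^sub>1\<close> gives an expected time of at most \<open>3n(2B + 1) B\<close>.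
\<close>

lemma nn_integral_add_point_mass_le:
  fixes g :: "'a \<Rightarrow> ennreal"
  assumes "\<And>y. g y \<le> c" and "g y0 + d \<le> c"
  shows "(\<integral>\<^sup>+y. g y \<partial>measure_pmf M) + d * ennreal (pmf M y0) \<le> c"
proof -
  have "(\<integral>\<^sup>+y. g y \<partial>measure_pmf M) + d * ennreal (pmf M y0)
      = (\<integral>\<^sup>+y. g y + d * indicator {y0} y \<partial>measure_pmf M)"
    by (simp add: nn_integral_add emeasure_pmf_single)
  also have "\<dots> \<le> (\<integral>\<^sup>+y. c \<partial>measure_pmf M)"
    using assms by (intro nn_integral_mono) (auto split: split_indicator)
  also have "\<dots> = c"
    by (simp add: measure_pmf.emeasure_space_1)
  finally show ?thesis .
qed

lemma nn_integral_pmf_of_set_add_one_le: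
  fixes f :: "'a \<Rightarrow> ennreal"
  assumes "finite P" and "x0 \<in> P" and "\<And>x. x \<in> P \<Longrightarrow> f x \<le> c"
    and "f x0 + of_nat (card P) \<le> c"
  shows "(\<integral>\<^sup>+x. f x \<partial>measure_pmf (pmf_of_set P)) + 1 \<le> c"
proof -
  define k where "k = card P"
  have k: "0 < k"
    using assms(1,2) by (auto simp: k_def card_gt_0_iff)
  have "sum f P + of_nat k = (f x0 + of_nat (card P)) + sum f (P - {x0})"
    using assms(1,2) by (simp add: k_def sum.remove add_ac)
  also have "\<dots> \<le> c + of_nat (card (P - {x0})) * c"
    using assms by (intro add_mono sum_bounded_above) auto
  also have "\<dots> = c + of_nat (k - 1) * c"
    using assms(1,2) by (simp add: k_def)
  also have "\<dots> = of_nat k * c"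
    using k by (cases k) (auto simp: algebra_simps)
  finally have sum_le: "sum f P + of_nat k \<le> of_nat k * c" .
  have k_ne: "(of_nat k :: ennreal) \<noteq> 0" "(of_nat k :: ennreal) < \<top>"
    using k by (auto simp: ennreal_of_nat_eq_real_of_nat)
  have "(\<integral>\<^sup>+x. f x \<partial>measure_pmf (pmf_of_set P)) + 1 = sum f P / of_nat k + of_nat k / of_nat k"
    using assms(1,2) k_ne by (simp add: nn_integral_pmf_of_set k_def)
  also have "\<dots> = (sum f P + of_nat k) / of_nat k"
    by (simp add: add_divide_distrib_ennreal)
  also have "\<dots> \<le> (of_nat k * c) / of_nat k"
    by (rule divide_right_mono_ennreal[OF sum_le])
  also have "\<dots> = c"
    using k_ne by (simp add: mult.commute ennreal_mult_divide_eq less_top)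
  finally show ?thesis .
qed

lemma additive_drift_bound:
  fixes p :: "nat \<Rightarrow> 'a pmf" and K :: "'a \<Rightarrow> 'a pmf" and V :: "'a \<Rightarrow> ennreal"
  assumes step: "\<And>t. p (Suc t) = bind_pmf (p t) K"
    and drift: "\<And>t s. s \<in> set_pmf (p t) \<Longrightarrow>
      (\<integral>\<^sup>+s'. V s' \<partial>measure_pmf (K s)) + indicator A s \<le> V s"
  shows "(\<Sum>t. ennreal (measure_pmf.prob (p t) A)) \<le> (\<integral>\<^sup>+s. V s \<partial>measure_pmf (p 0))"
proof (rule suminf_le_const[OF summableI])
  have partial: "(\<Sum>s<t. ennreal (measure_pmf.prob (p s) A)) + (\<integral>\<^sup>+s. V s \<partial>measure_pmf (p t))
      \<le> (\<integral>\<^sup>+s. V s \<partial>measure_pmf (p 0))" for t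
  proof (induction t)
    case 0
    show ?case by simp
  next
    case (Suc t)
    have "(\<integral>\<^sup>+s. V s \<partial>measure_pmf (p (Suc t))) + ennreal (measure_pmf.prob (p t) A)
        = (\<integral>\<^sup>+s. (\<integral>\<^sup>+s'. V s' \<partial>measure_pmf (K s)) + indicator A s \<partial>measure_pmf (p t))"
      by (simp add: step nn_integral_add measure_pmf.emeasure_eq_measure[symmetric])
    also have "\<dots> \<le> (\<integral>\<^sup>+s. V s \<partial>measure_pmf (p t))"
      by (intro nn_integral_mono_AE) (simp add: AE_measure_pmf_iff drift)
    finally have "(\<Sum>s<Suc t. ennreal (measure_pmf.prob (p s) A))
        + (\<integral>\<^sup>+s. V s \<partial>measure_pmf (p (Suc t)))
        \<le> (\<Sum>s<t. ennreal (measure_pmf.prob (p s) A)) + (\<integral>\<^sup>+s. V s \<partial>measure_pmf (p t))"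
      by (simp add: add_ac add_left_mono)
    from this Suc.IH show ?case
      by (rule order_trans)
  qed
  show "(\<Sum>s<t. ennreal (measure_pmf.prob (p s) A)) \<le> (\<integral>\<^sup>+s. V s \<partial>measure_pmf (p 0))" for t
    using partial[of t] by (rule order_trans[rotated]) simp
qed

definition box_index :: "nat \<Rightarrow> real \<Rightarrow> int" where
  "box_index n a = \<lceil>log (1 + delta n) (1 + a)\<rceil>"

lemma box_eq: "box n E w x = (box_index n (Cost n w x), box_index n (LP n E w x))"
  by (simp add: box_def box_index_def)

lemma one_less_box_base: "0 < n \<Longrightarrow> 1 < 1 + delta n"
  by (simp add: delta_def)

lemma box_index_nonneg:
  assumes "0 < n" and "0 \<le> a"
  shows "0 \<le> box_index n a"
proof -
  have "0 \<le> log (1 + delta n) (1 + a)"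
    using one_less_box_base[OF assms(1)] assms(2) by simp
  then show ?thesis
    by (simp add: box_index_def)
qed

lemma box_index_mono: "0 < n \<Longrightarrow> 0 \<le> a \<Longrightarrow> a \<le> b \<Longrightarrow> box_index n a \<le> box_index n b"
  using one_less_box_base[of n] by (simp add: box_index_def ceiling_mono)

lemma box_index_less_imp_less: "0 < n \<Longrightarrow> 0 \<le> b \<Longrightarrow> box_index n a < box_index n b \<Longrightarrow> a < b"
  using box_index_mono[of n b a] by force

lemma box_index_less:
  assumes "0 < n" and "0 \<le> a" and "(1 + a) * (1 + delta n) \<le> 1 + b"
  shows "box_index n a < box_index n b"
proof -
  let ?base = "1 + delta n"
  have base: "1 < ?base"
    by (rule one_less_box_base[OF assms(1)])
  have "log ?base (1 + a) + 1 = log ?base ((1 + a) * ?base)"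
    using base assms(2) by (simp add: log_mult)
  also have "\<dots> \<le> log ?base (1 + b)"
    using base assms(2,3) mult_pos_pos[of "1 + a" ?base] by (subst log_le_cancel_iff) linarith+
  finally have "\<lceil>log ?base (1 + a)\<rceil> \<le> \<lceil>log ?base (1 + b) - 1\<rceil>"
    by (intro ceiling_mono) simp
  then show ?thesis
    by (simp add: box_index_def)
qed

lemma Cost_nonneg: "0 \<le> Cost n w x"
  unfolding Cost_def by (intro sum_nonneg) auto

lemma Cost_le_card_mult:
  assumes "\<And>i. i < n \<Longrightarrow> x i \<Longrightarrow> w i \<le> m"
  shows "Cost n w x \<le> real n * real m"
proof -
  have "Cost n w x \<le> (\<Sum>i<n. real m)"
    unfolding Cost_def using assms by (intro sum_mono) auto
  then show ?thesis by simp
qed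

lemma le_Wmax: "i < n \<Longrightarrow> w i \<le> Wmax n w"
  unfolding Wmax_def by (intro Max_ge) auto

lemma Cost_le_Wmax: "Cost n w x \<le> real n * real (Wmax n w)"
  by (rule Cost_le_card_mult) (simp add: le_Wmax)

lemma Cost_fun_upd_False:
  assumes "v < n" and "x v"
  shows "Cost n w (x(v := False)) = Cost n w x - real (w v)"
  using assms unfolding Cost_def by (simp add: sum.remove[of "{..<n}" v])

lemma LP_le_feasible:
  assumes "\<forall>i\<in>Vx n x. 0 \<le> y i \<and> y i \<le> 1"
    and "\<forall>e\<in>Ex E x. \<forall>i j. e = {i, j} \<longrightarrow> 1 \<le> y i + y j"
  shows "LP n E w x \<le> (\<Sum>i\<in>Vx n x. real (w i) * y i)"
  unfolding LP_def
  by (rule cInf_lower) (use assms in \<open>auto intro!: bdd_belowI[of _ 0] sum_nonneg\<close>)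

lemma LP_nonneg: "0 \<le> LP n E w x"
  unfolding LP_def
  by (rule cInf_greatest) (auto intro!: sum_nonneg exI[of _ "\<lambda>_. 1 :: real"])

lemma LP_le_Wmax: "LP n E w x \<le> real n * real (Wmax n w)"
proof -
  have "LP n E w x \<le> (\<Sum>i\<in>Vx n x. real (w i) * 1)"
    by (rule LP_le_feasible) auto
  also have "\<dots> \<le> (\<Sum>i<n. real (w i))"
    by (simp, rule sum_mono2) (auto simp: Vx_def)
  also have "\<dots> \<le> (\<Sum>i<n. real (Wmax n w))"
    by (intro sum_mono) (simp add: le_Wmax)
  finally show ?thesis by simp
qed

definition box_bound :: "nat \<Rightarrow> (nat \<Rightarrow> nat) \<Rightarrow> int" where
  "box_bound n w = box_index n (real n * real (Wmax n w))"

lemma box_bound_nonneg: "0 < n \<Longrightarrow> 0 \<le> box_bound n w"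
  by (simp add: box_bound_def box_index_nonneg)

lemma box_index_in_range:
  "0 < n \<Longrightarrow> 0 \<le> a \<Longrightarrow> a \<le> real n * real (Wmax n w) \<Longrightarrow> box_index n a \<in> {0..box_bound n w}"
  by (simp add: box_bound_def box_index_nonneg box_index_mono)

lemma box_index_Cost_drop:
  assumes "v < n" and "x v" and "0 < w v" and "\<And>i. i < n \<Longrightarrow> x i \<Longrightarrow> w i \<le> w v"
  shows "box_index n (Cost n w (x(v := False))) < box_index n (Cost n w x)"
proof -
  define C where "C = Cost n w x"
  have n: "0 < n" using assms(1) by simp
  have C_le: "C \<le> real n * real (w v)"
    unfolding C_def by (rule Cost_le_card_mult) (use assms in auto)
  have C_drop: "Cost n w (x(v := False)) = C - real (w v)"
    unfolding C_def by (rule Cost_fun_upd_False[of v n x w, OF assms(1,2)])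
  have nonneg: "0 \<le> C - real (w v)"
    using Cost_nonneg C_drop by metis
  have "1 \<le> real (w v)"
    using assms(3) by simp
  then have "1 + (C - real (w v)) \<le> 2 * (real n * real (w v))"
    using C_le mult_nonneg_nonneg[of "real n" "real (w v)"] by linarith
  then have "(1 + (C - real (w v))) * delta n \<le> real (w v)"
    using n by (simp add: delta_def field_simps)
  then have "(1 + (C - real (w v))) * (1 + delta n) \<le> 1 + C"
    by (simp add: algebra_simps)
  then show ?thesis
    unfolding C_drop C_def[symmetric] using n nonneg by (rule box_index_less[rotated 2])
qed

definition well_formed_pop :: "nat \<Rightarrow> nat set set \<Rightarrow> (nat \<Rightarrow> nat) \<Rightarrow> (nat \<Rightarrow> bool) set \<Rightarrow> bool" where
  "well_formed_pop n E w P \<longleftrightarrow> finite P \<and> P \<noteq> {} \<and> (\<forall>x\<in>P. \<forall>i\<ge>n. \<not> x i) \<and>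
     inj_on (box n E w) P \<and>
     (\<forall>y\<in>P. \<forall>z\<in>P. \<not> (weakly_le (fit n E w y) (fit n E w z) \<and> fit n E w y \<noteq> fit n E w z))"

lemma demo_update_cases:
  obtains (rejected) "demo_update n E w P x' = P"
  | (accepted) "demo_update n E w P x' = insert x' {z \<in> P. \<not> (weakly_le (fit n E w x') (fit n E w z)
        \<or> box n E w z = box n E w x')}"
    and "\<forall>y\<in>P. \<not> (weakly_le (fit n E w y) (fit n E w x') \<and> fit n E w y \<noteq> fit n E w x')"
proof (cases "\<exists>y\<in>P. (weakly_le (fit n E w y) (fit n E w x') \<and> fit n E w y \<noteq> fit n E w x')
    \<or> (box n E w y = box n E w x' \<and> Cost n w y + 2 * LP n E w y \<le> Cost n w x' + 2 * LP n E w x')")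
  case True
  then show thesis
    by (intro rejected) (simp add: demo_update_def)
next
  case False
  then have "\<forall>y\<in>P. \<not> (weakly_le (fit n E w y) (fit n E w x') \<and> fit n E w y \<noteq> fit n E w x')"
    by blast
  then show thesis
    by (rule accepted[rotated]) (simp only: demo_update_def if_not_P[OF False])
qed

lemma demo_update_accepts_lower_box:
  assumes "0 < n" and "\<forall>y\<in>P. box_index n (Cost n w x') < box_index n (Cost n w y)"
  shows "x' \<in> demo_update n E w P x'"
proof -
  have "\<not> Cost n w y \<le> Cost n w x'" if "y \<in> P" for y
    using assms that by (auto dest: box_index_less_imp_less[OF _ Cost_nonneg])
  moreover have "box n E w y \<noteq> box n E w x'" if "y \<in> P" for y
    using assms that by (auto simp: box_eq)
  ultimately show ?thesis
    by (auto simp: demo_update_def weakly_le_def fit_def)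
qed

lemma well_formed_pop_demo_update:
  assumes wf: "well_formed_pop n E w P" and x': "\<forall>i\<ge>n. \<not> x' i"
  shows "well_formed_pop n E w (demo_update n E w P x')"
proof (cases rule: demo_update_cases[of n E w P x'])
  case rejected
  then show ?thesis using wf by simp
next
  case accepted
  define Q where "Q = {z \<in> P. \<not> (weakly_le (fit n E w x') (fit n E w z) \<or> box n E w z = box n E w x')}"
  have QP: "Q \<subseteq> P" and x'_notin: "x' \<notin> Q"
    by (auto simp: Q_def weakly_le_def)
  have "inj_on (box n E w) (insert x' Q)"
    using wf QP x'_notin by (auto simp: well_formed_pop_def Q_def intro: inj_on_subset)
  moreover have "\<forall>y\<in>insert x' Q. \<forall>z\<in>insert x' Q.
      \<not> (weakly_le (fit n E w y) (fit n E w z) \<and> fit n E w y \<noteq> fit n E w z)"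
    using wf QP accepted(2) by (auto simp: well_formed_pop_def Q_def)
  ultimately show ?thesis
    using wf x' QP unfolding accepted(1) Q_def[symmetric] well_formed_pop_def
    by (auto intro: finite_subset)
qed

lemma mutate_outside: "x' \<in> set_pmf (mutate n x) \<Longrightarrow> n \<le> i \<Longrightarrow> x' i = x i"
  using set_Pi_pmf_subset[of "{0..<n}" False "\<lambda>_. bernoulli_pmf (1 / real n)"]
  by (fastforce simp: mutate_def)

lemma init_pt_outside: "x \<in> set_pmf (init_pt n) \<Longrightarrow> n \<le> i \<Longrightarrow> \<not> x i"
  using set_Pi_pmf_subset[of "{0..<n}" False "\<lambda>_. bernoulli_pmf (1 / 2)"]
  by (auto simp: init_pt_def)

lemma well_formed_pop_demo_step_stopped:
  assumes wf: "well_formed_pop n E w P" and P': "P' \<in> set_pmf (demo_step_stopped n E w P)"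
  shows "well_formed_pop n E w P'"
proof (cases "zero_pt \<in> P")
  case True
  then show ?thesis using assms by (simp add: demo_step_stopped_def)
next
  case False
  with assms obtain x x' where "x \<in> P" "x' \<in> set_pmf (mutate n x)"
      and P'_eq: "P' = demo_update n E w P x'"
    by (auto simp: demo_step_stopped_def demo_step_def well_formed_pop_def)
  then have "\<forall>i\<ge>n. \<not> x' i"
    using wf mutate_outside by (fastforce simp: well_formed_pop_def)
  then show ?thesis
    unfolding P'_eq by (rule well_formed_pop_demo_update[OF wf])
qed

lemma well_formed_demo_pop: "P \<in> set_pmf (demo_pop n E w t) \<Longrightarrow> well_formed_pop n E w P"
proof (induction t arbitrary: P)
  case 0
  then show ?case
    by (auto simp: well_formed_pop_def dest: init_pt_outside)
next
  case (Suc t)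
  then obtain Q where "Q \<in> set_pmf (demo_pop n E w t)" and "P \<in> set_pmf (demo_step_stopped n E w Q)"
    by auto
  then show ?case
    using Suc.IH well_formed_pop_demo_step_stopped by blast
qed

lemma card_well_formed_pop:
  assumes wf: "well_formed_pop n E w P" and n: "0 < n"
  shows "real (card P) \<le> 2 * real_of_int (box_bound n w) + 1"
proof -
  define b1 where "b1 x = box_index n (Cost n w x)" for x
  define b2 where "b2 x = box_index n (LP n E w x)" for x
  have diagonal: "b1 y - b2 y \<noteq> b1 z - b2 z" if "y \<in> P" "z \<in> P" "b1 y < b1 z" for y z
  proof
    assume "b1 y - b2 y = b1 z - b2 z"
    with \<open>b1 y < b1 z\<close> have "b2 y < b2 z" by simp
    then have "LP n E w y < LP n E w z" and "Cost n w y < Cost n w z"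
      using \<open>b1 y < b1 z\<close> n unfolding b1_def b2_def
      by (auto intro: box_index_less_imp_less LP_nonneg Cost_nonneg)
    then have "weakly_le (fit n E w y) (fit n E w z) \<and> fit n E w y \<noteq> fit n E w z"
      by (auto simp: weakly_le_def fit_def)
    then show False
      using wf that(1,2) unfolding well_formed_pop_def by blast
  qed
  have "inj_on (\<lambda>x. b1 x - b2 x) P"
  proof (rule inj_onI)
    fix y z
    assume yz: "y \<in> P" "z \<in> P" "b1 y - b2 y = b1 z - b2 z"
    then have "b1 y = b1 z"
      using diagonal[of y z] diagonal[of z y] by fastforce
    with yz have "box n E w y = box n E w z"
      by (simp add: box_eq b1_def b2_def)
    then show "y = z"
      using wf yz(1,2) by (auto simp: well_formed_pop_def inj_on_def)
  qed
  moreover have "b1 x - b2 x \<in> {- box_bound n w .. box_bound n w}" for x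
    using box_index_in_range[OF n Cost_nonneg[of n w x] Cost_le_Wmax[of n w x]]
      box_index_in_range[OF n LP_nonneg[of n E w x] LP_le_Wmax[of n E w x]]
    by (simp add: b1_def b2_def)
  then have "(\<lambda>x. b1 x - b2 x) ` P \<subseteq> {- box_bound n w .. box_bound n w}"
    by blast
  ultimately have "card P \<le> card {- box_bound n w .. box_bound n w}"
    by (metis card_image card_mono finite_atLeastAtMost_int)
  then have "int (card P) \<le> 2 * box_bound n w + 1"
    using box_bound_nonneg[OF n, of w] by (simp add: le_nat_iff)
  then have "real_of_int (int (card P)) \<le> real_of_int (2 * box_bound n w + 1)"
    by (rule of_int_le_iff[THEN iffD2])
  then show ?thesis
    by simp
qed

definition min_cost_box :: "nat \<Rightarrow> (nat \<Rightarrow> nat) \<Rightarrow> (nat \<Rightarrow> bool) set \<Rightarrow> int" where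
  "min_cost_box n w P = Min ((\<lambda>x. box_index n (Cost n w x)) ` P)"

lemma min_cost_box_le: "finite P \<Longrightarrow> x \<in> P \<Longrightarrow> min_cost_box n w P \<le> box_index n (Cost n w x)"
  unfolding min_cost_box_def by (rule Min_le) auto

lemma min_cost_box_attained:
  assumes "finite P" and "P \<noteq> {}"
  obtains x where "x \<in> P" and "min_cost_box n w P = box_index n (Cost n w x)"
proof -
  have "min_cost_box n w P \<in> (\<lambda>x. box_index n (Cost n w x)) ` P"
    unfolding min_cost_box_def using assms by (intro Min_in) auto
  then show thesis
    using that by blast
qed

lemma min_cost_box_in_range:
  assumes "well_formed_pop n E w P" and "0 < n"
  shows "min_cost_box n w P \<in> {0..box_bound n w}"
proof -
  obtain x where "x \<in> P" and "min_cost_box n w P = box_index n (Cost n w x)"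
    by (rule min_cost_box_attained) (use assms(1) in \<open>auto simp: well_formed_pop_def\<close>)
  then show ?thesis
    using box_index_in_range[OF assms(2) Cost_nonneg Cost_le_Wmax] by simp
qed

lemma min_cost_box_demo_update:
  assumes wf: "well_formed_pop n E w P" and n: "0 < n"
  shows "min_cost_box n w (demo_update n E w P x') \<le> min_cost_box n w P"
proof (cases rule: demo_update_cases[of n E w P x'])
  case rejected
  then show ?thesis by simp
next
  case accepted
  let ?Q = "demo_update n E w P x'"
  have fin: "finite ?Q"
    using wf accepted(1) by (simp add: well_formed_pop_def)
  obtain z where z: "z \<in> P" and min_eq: "min_cost_box n w P = box_index n (Cost n w z)"
    by (rule min_cost_box_attained) (use wf in \<open>auto simp: well_formed_pop_def\<close>)
  show ?thesis
  proof (cases "z \<in> ?Q")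
    case True
    then show ?thesis
      using min_cost_box_le[OF fin] min_eq by simp
  next
    case False
    then have "weakly_le (fit n E w x') (fit n E w z) \<or> box n E w z = box n E w x'"
      using z accepted(1) by auto
    then have "box_index n (Cost n w x') \<le> box_index n (Cost n w z)"
      using n by (auto simp: weakly_le_def fit_def box_eq intro: box_index_mono Cost_nonneg)
    moreover have "min_cost_box n w ?Q \<le> box_index n (Cost n w x')"
      using accepted(1) by (intro min_cost_box_le[OF fin]) simp
    ultimately show ?thesis
      using min_eq by linarith
  qed
qed

lemma min_cost_box_progress:
  assumes wf: "well_formed_pop n E w P" and n: "0 < n" and pos: "\<forall>i<n. 0 < w i"
    and no_zero: "zero_pt \<notin> P"
  obtains x v where "x \<in> P" and "v < n" and "x v"
    and "min_cost_box n w (demo_update n E w P (x(v := False))) < min_cost_box n w P"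
proof -
  have fin: "finite P" "P \<noteq> {}"
    using wf by (auto simp: well_formed_pop_def)
  define x where "x = arg_min_on (Cost n w) P"
  have x: "x \<in> P" and x_min: "\<And>y. y \<in> P \<Longrightarrow> Cost n w x \<le> Cost n w y"
    unfolding x_def using arg_min_if_finite(1)[OF fin] arg_min_least[OF fin] by auto
  define S where "S = {i. i < n \<and> x i}"
  have "x \<noteq> zero_pt"
    using x no_zero by auto
  then obtain i where "x i"
    by (auto simp: zero_pt_def)
  moreover have "i < n"
    using wf x \<open>x i\<close> unfolding well_formed_pop_def by (meson not_le)
  ultimately have S: "finite S" "S \<noteq> {}"
    by (auto simp: S_def)
  have "Max (w ` S) \<in> w ` S"
    using S by (intro Max_in) auto
  then obtain v where v: "v \<in> S" and v_max: "w v = Max (w ` S)"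
    by (metis imageE)
  have "v < n" "x v"
    using v by (auto simp: S_def)
  have heaviest: "w i \<le> w v" if "i < n" "x i" for i
    unfolding v_max using S that by (intro Max_ge) (auto simp: S_def)
  define x' where "x' = x(v := False)"
  have drop: "box_index n (Cost n w x') < box_index n (Cost n w x)"
    unfolding x'_def using \<open>v < n\<close> \<open>x v\<close> pos heaviest by (intro box_index_Cost_drop) auto
  have x_le: "box_index n (Cost n w x) \<le> box_index n (Cost n w y)" if "y \<in> P" for y
    using n x_min[OF that] by (intro box_index_mono Cost_nonneg)
  have "well_formed_pop n E w (demo_update n E w P x')"
    using wf x unfolding x'_def by (intro well_formed_pop_demo_update) (auto simp: well_formed_pop_def)
  moreover have "x' \<in> demo_update n E w P x'"
    using drop x_le by (intro demo_update_accepts_lower_box[OF n]) (auto intro: less_le_trans)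
  ultimately have "min_cost_box n w (demo_update n E w P x') \<le> box_index n (Cost n w x')"
    by (intro min_cost_box_le) (auto simp: well_formed_pop_def)
  also have "\<dots> < min_cost_box n w P"
    using drop x_le min_cost_box_attained[OF fin] by (metis order.strict_trans2)
  finally show ?thesis
    using that x \<open>v < n\<close> \<open>x v\<close> unfolding x'_def by blast
qed

lemma one_third_le_power:
  assumes "2 \<le> n"
  shows "1 / 3 \<le> (1 - 1 / real n) ^ (n - 1)"
proof -
  define m where "m = n - 1"
  have m: "1 \<le> m" and n_eq: "real n = real m + 1"
    using assms by (auto simp: m_def)
  have "(1 + 1 / real m) ^ m \<le> exp (1 / real m) ^ m"
    by (intro power_mono) (auto simp: exp_ge_add_one_self add_increasing2)
  also have "\<dots> = exp 1"
    using m by (simp add: exp_of_nat_mult[symmetric])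
  also have "\<dots> \<le> 3"
    by (rule exp_le)
  finally have "(1 + 1 / real m) ^ m \<le> 3" .
  moreover have "(1 - 1 / real n) ^ m * (1 + 1 / real m) ^ m = 1"
  proof -
    have m_pos: "0 < real m"
      using m by simp
    have "(1 - 1 / real n) * (1 + 1 / real m) = (real m / (real m + 1)) * ((real m + 1) / real m)"
      using m_pos unfolding n_eq by (simp add: field_simps)
    also have "\<dots> = 1"
      using m_pos by simp
    finally show ?thesis
      by (simp add: power_mult_distrib[symmetric])
  qed
  moreover have "0 \<le> (1 - 1 / real n) ^ m"
    using assms by simp
  ultimately have "1 \<le> (1 - 1 / real n) ^ m * 3"
    by (metis mult_left_mono)
  then show ?thesis
    by (simp add: m_def)
qed

lemma pmf_mutate_flip_ge:
  assumes n: "2 \<le> n" and "v < n" and "x v"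
  shows "1 / (3 * real n) \<le> pmf (mutate n x) (x(v := False))"
proof -
  define M where "M = Pi_pmf {0..<n} False (\<lambda>_. bernoulli_pmf (1 / real n))"
  define flips where "flips = (\<lambda>i. i = v)"
  have "pmf M flips = (\<Prod>i\<in>{0..<n}. pmf (bernoulli_pmf (1 / real n)) (flips i))"
    unfolding M_def by (subst pmf_Pi) (auto simp: flips_def \<open>v < n\<close>)
  also have "\<dots> = 1 / real n * (\<Prod>i\<in>{0..<n} - {v}. 1 - 1 / real n)"
    using n \<open>v < n\<close> by (simp add: prod.remove[of _ v] flips_def)
  also have "\<dots> = 1 / real n * (1 - 1 / real n) ^ (n - 1)"
    using \<open>v < n\<close> by simp
  finally have pmf_flips: "pmf M flips = 1 / real n * (1 - 1 / real n) ^ (n - 1)" .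
  have "1 / (3 * real n) \<le> 1 / real n * (1 - 1 / real n) ^ (n - 1)"
    using mult_left_mono[OF one_third_le_power[OF n], of "1 / real n"] by simp
  also have "\<dots> = measure M {flips}"
    by (simp add: pmf_flips measure_pmf_single)
  also have "\<dots> \<le> measure M ((\<lambda>f i. x i \<noteq> f i) -` {x(v := False)})"
    using \<open>x v\<close> by (intro measure_pmf.finite_measure_mono) (auto simp: flips_def)
  also have "\<dots> = pmf (mutate n x) (x(v := False))"
    by (simp add: mutate_def M_def pmf_map)
  finally show ?thesis .
qed

text \<open>\<open>drift_scale n w\<close> is the inverse of the lower bound \<open>1/(3n(2B + 1))\<close> on the probability
  of an improving step; scaling by it makes the expected decrease of the potential at least one.\<close>

definition drift_scale :: "nat \<Rightarrow> (nat \<Rightarrow> nat) \<Rightarrow> real" where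
  "drift_scale n w = 3 * real n * (2 * real_of_int (box_bound n w) + 1)"

definition potential :: "nat \<Rightarrow> (nat \<Rightarrow> nat) \<Rightarrow> (nat \<Rightarrow> bool) set \<Rightarrow> ennreal" where
  "potential n w P = ennreal (drift_scale n w * real_of_int (min_cost_box n w P))"

lemma drift_scale_nonneg: "0 < n \<Longrightarrow> 0 \<le> drift_scale n w"
  using box_bound_nonneg[of n w] by (simp add: drift_scale_def)

lemma demo_step_stopped_drift:
  assumes wf: "well_formed_pop n E w P" and n: "2 \<le> n" and pos: "\<forall>i<n. 0 < w i"
  shows "(\<integral>\<^sup>+P'. potential n w P' \<partial>measure_pmf (demo_step_stopped n E w P))
           + indicator {P. zero_pt \<notin> P} P \<le> potential n w P"
proof (cases "zero_pt \<in> P")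
  case True
  then show ?thesis
    by (simp add: demo_step_stopped_def)
next
  case False
  have n0: "0 < n"
    using n by simp
  let ?c = "drift_scale n w"
  have c: "0 \<le> ?c"
    by (rule drift_scale_nonneg[OF n0])
  define g where "g y = (\<integral>\<^sup>+x'. potential n w (demo_update n E w P x') \<partial>measure_pmf (mutate n y))" for y
  obtain x v where x: "x \<in> P" "v < n" "x v" and
    progress: "min_cost_box n w (demo_update n E w P (x(v := False))) < min_cost_box n w P"
    using min_cost_box_progress[OF wf n0 pos False] by blast
  have update_le: "potential n w (demo_update n E w P x') \<le> potential n w P" for x'
    unfolding potential_def using min_cost_box_demo_update[OF wf n0] c
    by (intro ennreal_leI mult_left_mono) auto
  have g_le: "g y \<le> potential n w P" for y
  proof -
    have "g y \<le> (\<integral>\<^sup>+x'. potential n w P \<partial>measure_pmf (mutate n y))"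
      unfolding g_def by (intro nn_integral_mono update_le)
    then show ?thesis
      by (simp add: measure_pmf.emeasure_space_1)
  qed
  have "potential n w (demo_update n E w P (x(v := False))) + ennreal ?c \<le> potential n w P"
  proof -
    let ?m = "min_cost_box n w (demo_update n E w P (x(v := False)))"
    have "well_formed_pop n E w (demo_update n E w P (x(v := False)))"
      using wf x(1) by (intro well_formed_pop_demo_update) (auto simp: well_formed_pop_def)
    then have "0 \<le> ?m"
      using min_cost_box_in_range[OF _ n0] by simp
    then have "potential n w (demo_update n E w P (x(v := False))) + ennreal ?c
        = ennreal (?c * real_of_int ?m + ?c)"
      unfolding potential_def using c by (intro ennreal_plus[symmetric]) simp_all
    also have "\<dots> = ennreal (?c * (real_of_int ?m + 1))"
      by (simp add: distrib_left)
    also have "\<dots> \<le> potential n w P"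
      using progress c unfolding potential_def by (intro ennreal_leI mult_left_mono) auto
    finally show ?thesis .
  qed
  then have g_x: "g x + ennreal ?c * ennreal (pmf (mutate n x) (x(v := False))) \<le> potential n w P"
    unfolding g_def
    by (rule nn_integral_add_point_mass_le[where g = "\<lambda>x'. potential n w (demo_update n E w P x')",
          OF update_le])
  have "real (card P) \<le> ?c * (1 / (3 * real n))"
    using card_well_formed_pop[OF wf n0] n0 by (simp add: drift_scale_def)
  also have "\<dots> \<le> ?c * pmf (mutate n x) (x(v := False))"
    using pmf_mutate_flip_ge[of n v x, OF n x(2,3)] c by (rule mult_left_mono)
  finally have "of_nat (card P) \<le> ennreal ?c * ennreal (pmf (mutate n x) (x(v := False)))"
    using c by (simp add: ennreal_of_nat_eq_real_of_nat ennreal_mult'[symmetric] ennreal_leI)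
  then have "g x + of_nat (card P) \<le> potential n w P"
    using g_x by (meson add_left_mono order_trans)
  then have "(\<integral>\<^sup>+y. g y \<partial>measure_pmf (pmf_of_set P)) + 1 \<le> potential n w P"
    using wf x(1) g_le by (intro nn_integral_pmf_of_set_add_one_le) (auto simp: well_formed_pop_def)
  then show ?thesis
    using False wf by (simp add: demo_step_stopped_def demo_step_def g_def well_formed_pop_def)
qed

lemma demo_expected_time_le:
  assumes "2 \<le> n" and "\<forall>i<n. 0 < w i"
  shows "demo_expected_time n E w \<le> ennreal (drift_scale n w * real_of_int (box_bound n w))"
proof -
  have "demo_expected_time n E w \<le> (\<integral>\<^sup>+P. potential n w P \<partial>measure_pmf (demo_pop n E w 0))"
    unfolding demo_expected_time_def using assms
    by (intro additive_drift_bound[where K = "demo_step_stopped n E w"]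
        demo_step_stopped_drift well_formed_demo_pop) auto
  also have "\<dots> \<le> (\<integral>\<^sup>+P. ennreal (drift_scale n w * real_of_int (box_bound n w))
      \<partial>measure_pmf (demo_pop n E w 0))"
  proof (intro nn_integral_mono_AE, unfold AE_measure_pmf_iff, intro ballI)
    fix P
    assume "P \<in> set_pmf (demo_pop n E w 0)"
    then have "well_formed_pop n E w P"
      by (rule well_formed_demo_pop)
    then have "min_cost_box n w P \<le> box_bound n w"
      using min_cost_box_in_range assms(1) by fastforce
    then show "potential n w P \<le> ennreal (drift_scale n w * real_of_int (box_bound n w))"
      unfolding potential_def using drift_scale_nonneg[of n w] assms(1)
      by (intro ennreal_leI mult_left_mono) auto
  qed
  also have "\<dots> = ennreal (drift_scale n w * real_of_int (box_bound n w))"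
    by (simp add: measure_pmf.emeasure_space_1)
  finally show ?thesis .
qed

lemma one_le_n_mult_log_bound:
  assumes "2 \<le> n" and "1 \<le> W"
  shows "1 \<le> real n * (ln (real n) + ln (real W))"
proof -
  have "ln 2 \<le> ln (real n)" and "0 \<le> ln (real W)"
    using assms by auto
  then have "1 / 2 \<le> ln (real n) + ln (real W)"
    using ln2_ge_two_thirds by linarith
  then have "2 * (1 / 2) \<le> real n * (ln (real n) + ln (real W))"
    using assms(1) by (intro mult_mono) auto
  then show ?thesis
    by simp
qed

lemma box_bound_le:
  assumes n: "2 \<le> n" and W: "1 \<le> Wmax n w"
  shows "real_of_int (box_bound n w) \<le> 9 * (real n * (ln (real n) + ln (real (Wmax n w))))"
proof -
  define W where "W = real (Wmax n w)"
  define L where "L = ln (real n) + ln W"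
  have W1: "1 \<le> W" and n2: "2 \<le> real n"
    using W n by (auto simp: W_def)
  have ln_n: "ln 2 \<le> ln (real n)" and ln_W: "0 \<le> ln W"
    using n2 W1 by auto
  have "delta n / 2 \<le> delta n - (delta n)\<^sup>2"
    using n2 by (simp add: delta_def power2_eq_square field_simps)
  also have "\<dots> \<le> ln (1 + delta n)"
    using n2 by (intro ln_one_plus_pos_lower_bound) (auto simp: delta_def)
  finally have ln_base: "1 / (4 * real n) \<le> ln (1 + delta n)"
    by (simp add: delta_def)
  have nW: "1 \<le> real n * W"
    using mult_mono[of 1 "real n" 1 W] n2 W1 by simp
  then have "ln (1 + real n * W) \<le> ln (2 * real n * W)"
    by (subst ln_le_cancel_iff) (auto simp: mult.commute)
  also have "\<dots> = ln 2 + ln (real n) + ln W"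
    using n2 W1 by (simp add: ln_mult)
  also have "\<dots> \<le> 2 * L"
    unfolding L_def distrib_left using ln_n ln_W by linarith
  finally have ln_top: "ln (1 + real n * W) \<le> 2 * L" .
  have ln_base_pos: "0 < ln (1 + delta n)"
    using ln_base n2 by (smt (verit) divide_pos_pos)
  have "log (1 + delta n) (1 + real n * W) = ln (1 + real n * W) / ln (1 + delta n)"
    by (simp add: log_def)
  also have "\<dots> \<le> ln (1 + real n * W) / (1 / (4 * real n))"
    using n2 nW ln_base ln_base_pos by (intro divide_left_mono) auto
  also have "\<dots> \<le> 8 * (real n * L)"
    using ln_top n2 by simp
  finally have "log (1 + delta n) (1 + real n * W) \<le> 8 * (real n * L)" .
  moreover have "1 \<le> real n * L"
    unfolding L_def W_def by (rule one_le_n_mult_log_bound[OF n W])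
  ultimately show ?thesis
    unfolding box_bound_def box_index_def W_def[symmetric] L_def[symmetric] by linarith
qed

lemma drift_scale_mult_box_bound_le:
  assumes n: "2 \<le> n" and W: "1 \<le> Wmax n w"
  shows "drift_scale n w * real_of_int (box_bound n w)
    \<le> 513 * real n ^ 3 * (ln (real n) + ln (real (Wmax n w))) ^ 2"
proof -
  define X where "X = real n * (ln (real n) + ln (real (Wmax n w)))"
  have B: "real_of_int (box_bound n w) \<le> 9 * X" and B0: "0 \<le> box_bound n w"
    using box_bound_le[OF n W] box_bound_nonneg[of n w] n by (auto simp: X_def)
  have "1 \<le> X"
    unfolding X_def by (rule one_le_n_mult_log_bound[OF n W])
  with B have "drift_scale n w \<le> 3 * real n * (19 * X)"
    unfolding drift_scale_def by (intro mult_left_mono) auto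
  then have "drift_scale n w * real_of_int (box_bound n w) \<le> (3 * real n * (19 * X)) * (9 * X)"
    using B B0 drift_scale_nonneg[of n w] n by (intro mult_mono) auto
  also have "\<dots> = 513 * real n ^ 3 * (ln (real n) + ln (real (Wmax n w))) ^ 2"
    by (simp add: X_def power2_eq_square power3_eq_cube algebra_simps)
  finally show ?thesis .
qed

theorem lemma7:
  shows "\<exists>C N::nat. C > (0::real) \<and>
    (\<forall>n E w. n \<ge> N \<longrightarrow> wvc_instance n E w \<longrightarrow>
       demo_expected_time n E w
         \<le> ennreal (C * real n ^ 3 * (ln (real n) + ln (real (Wmax n w))) ^ 2))"
proof (rule exI[of _ 513], rule exI[of _ 2], intro conjI allI impI)
  fix n E w
  assume n: "2 \<le> n" and inst: "wvc_instance n E w"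
  have pos: "\<forall>i<n. 0 < w i"
    using inst by (simp add: wvc_instance_def)
  have W: "1 \<le> Wmax n w"
    using le_Wmax[of 0 n w] pos n by fastforce
  have "demo_expected_time n E w \<le> ennreal (drift_scale n w * real_of_int (box_bound n w))"
    by (rule demo_expected_time_le[OF n pos])
  also have "\<dots> \<le> ennreal (513 * real n ^ 3 * (ln (real n) + ln (real (Wmax n w))) ^ 2)"
    by (rule ennreal_leI[OF drift_scale_mult_box_bound_le[OF n W]])
  finally show "demo_expected_time n E w
      \<le> ennreal (513 * real n ^ 3 * (ln (real n) + ln (real (Wmax n w))) ^ 2)" .
qed simp

end
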